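(* Let $(\mathbb X,d)$ be a proper complete metric space and let $F_t=\{f_{(1,t)},\dots,f_{(N,t)}\}$, $t\in[0,1]$, be a one-parameter family satisfying (H2), such that for each $i$ the map $[0,1]\ni t\mapsto f_{(i,t)}$ is continuous with respect to the topology of uniform convergence on $\mathbb X$ (i.e. $\sup_{x\in\mathbb X}d(f_{(i,s)}(x),f_{(i,t)}(x))\to0$ as $s\to t$). Then $F_t$ admits at least one upper transition attractor.
   Context: A metric space is proper if closed bounded sets are compact. A one-parameter family is $F_t=\{f_{(1,t)},\dots,f_{(N,t)}\}$, $t\in[0,1]$, $N\ge2$, of continuous self-maps of $\mathbb X$; $\mathrm{Lip}(F_t,d)=\max_i\sup_{x\ne y}d(f_{(i,t)}(x),f_{(i,t)}(y))/d(x,y)$. (H2): $\mathrm{Lip}(F_t,d)<1$ for all $t\in[0,1)$. For $t\in[0,1)$, $A_t$ denotes the attractor of $F_t$, i.e. the unique nonempty compact set with $A_t=\bigcup_i f_{(i,t)}(A_t)$. With $h$ the Hausdorff metric on nonempty compact sets, an upper transition attractor of $F_t$ is a compact set $A^\bullet$ for which there is an increasing sequence $t_n\in[0,1)$, $t_n\to1$, with $h(A_{t_n},A^\bullet)\to0$. *)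

theory Defs
  imports "HOL-Analysis.Analysis"
begin

definition hausdorff_dist :: "'a::metric_space set \<Rightarrow> 'a set \<Rightarrow> real" where
  "hausdorff_dist A B = max (SUP a\<in>A. infdist a B) (SUP b\<in>B. infdist b A)"

definition is_attractor :: "nat \<Rightarrow> (nat \<Rightarrow> 'a::metric_space \<Rightarrow> 'a) \<Rightarrow> 'a set \<Rightarrow> bool" where
  "is_attractor N g A \<longleftrightarrow> A \<noteq> {} \<and> compact A \<and> A = (\<Union>i\<in>{1..N}. g i ` A)"

text \<open>The attractor A_t of F_t (unique under (H2)).\<close>
definition attractor :: "nat \<Rightarrow> (nat \<Rightarrow> 'a::metric_space \<Rightarrow> 'a) \<Rightarrow> 'a set" where
  "attractor N g = (THE A. is_attractor N g A)"

definition upper_transition_attractor ::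
  "nat \<Rightarrow> (nat \<Rightarrow> real \<Rightarrow> 'a::metric_space \<Rightarrow> 'a) \<Rightarrow> 'a set \<Rightarrow> bool" where
  "upper_transition_attractor N f B \<longleftrightarrow> B \<noteq> {} \<and> compact B \<and>
     (\<exists>tn :: nat \<Rightarrow> real. strict_mono tn \<and> (\<forall>n. tn n \<in> {0..<1}) \<and> tn \<longlonglongrightarrow> 1 \<and>
        (\<lambda>n. hausdorff_dist (attractor N (\<lambda>i. f i (tn n))) B) \<longlonglongrightarrow> 0)"

end

theory Submission
  imports Defs "HOL-Complex_Analysis.Great_Picard"
begin

text \<open>
  Uniform continuity of t \<mapsto> f_(i,t) at t = 1 makes every f_(i,s) with s close to 1
  uniformly 2-close to the contraction f_(i,t0) for one fixed t0 < 1; hence a large closed ball K,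
  compact by properness, is mapped into itself by all these maps. For s \<in> [t0,1) the attractor A_s
  is then the intersection of the Hutchinson iterates of K and lies in K. For any t_n increasing to 1
  the Blaschke selection theorem in K -- proved through the 1-Lipschitz functions infdist x A_(t_n),
  which have a uniformly convergent subsequence -- yields a subsequence of attractors converging in
  the Hausdorff distance; its limit is an upper transition attractor.
\<close>

section \<open>Attractors of iterated function systems\<close>

lemma decseq_compact_Inter_nonempty:
  fixes E :: "nat \<Rightarrow> 'a::topological_space set"
  assumes "compact (E 0)" "\<And>n. closed (E n)" "\<And>n. E n \<noteq> {}" "decseq E"
  shows "\<Inter>(range E) \<noteq> {}"
proof -
  have "E 0 \<inter> (\<Inter>n\<in>UNIV. E n) \<noteq> {}"
  proof (rule compact_imp_fip_image[OF assms(1)])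
    fix I :: "nat set" assume "finite I"
    then have "E (Max (insert 0 I)) \<subseteq> E n" if "n \<in> insert 0 I" for n
      using that by (intro decseqD[OF assms(4)] Max_ge) auto
    then have "E (Max (insert 0 I)) \<subseteq> E 0 \<inter> (\<Inter>n\<in>I. E n)"
      by blast
    then show "E 0 \<inter> (\<Inter>n\<in>I. E n) \<noteq> {}"
      using assms(3) by blast
  qed (use assms(2) in auto)
  then show ?thesis by blast
qed

lemma infdist_attained_compact:
  fixes A :: "'a::metric_space set"
  assumes "compact A" "A \<noteq> {}"
  obtains a where "a \<in> A" "infdist x A = dist x a"
proof -
  obtain a where a: "a \<in> A" "\<And>y. y \<in> A \<Longrightarrow> dist x a \<le> dist x y"
    using continuous_attains_inf[OF assms continuous_on_dist[OF continuous_on_const continuous_on_id]]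
    by blast
  have "infdist x A = dist x a"
    using a assms(2) by (intro antisym infdist_le) (auto simp: infdist_notempty intro: cINF_greatest)
  with a(1) show thesis by (rule that)
qed

definition hutchinson :: "nat \<Rightarrow> (nat \<Rightarrow> 'a \<Rightarrow> 'a) \<Rightarrow> 'a set \<Rightarrow> 'a set" where
  "hutchinson N g S = (\<Union>i\<in>{1..N}. g i ` S)"

lemma is_attractor_iff_hutchinson:
  "is_attractor N g A \<longleftrightarrow> A \<noteq> {} \<and> compact A \<and> hutchinson N g A = A"
  unfolding is_attractor_def hutchinson_def by auto

lemma hutchinson_mono: "S \<subseteq> T \<Longrightarrow> hutchinson N g S \<subseteq> hutchinson N g T"
  unfolding hutchinson_def by blast

lemma hutchinson_compact:
  assumes "\<And>i. i \<in> {1..N} \<Longrightarrow> continuous_on S (g i)" "compact S"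
  shows "compact (hutchinson N g S)"
  unfolding hutchinson_def using assms by (intro compact_UN compact_continuous_image) auto

lemma hutchinson_nonempty: "N \<ge> 1 \<Longrightarrow> S \<noteq> {} \<Longrightarrow> hutchinson N g S \<noteq> {}"
  unfolding hutchinson_def by auto

lemma hutchinson_Inter_decseq:
  fixes g :: "nat \<Rightarrow> 'a::metric_space \<Rightarrow> 'a"
  assumes cont: "\<And>i. i \<in> {1..N} \<Longrightarrow> continuous_on UNIV (g i)"
    and E: "\<And>n. compact (E n)" "decseq E" "\<And>n. E (Suc n) = hutchinson N g (E n)"
  shows "hutchinson N g (\<Inter>(range E)) = \<Inter>(range E)"
proof
  show "hutchinson N g (\<Inter>(range E)) \<subseteq> \<Inter>(range E)"
  proof (intro INF_greatest)
    fix n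
    have "hutchinson N g (\<Inter>(range E)) \<subseteq> hutchinson N g (E n)"
      by (intro hutchinson_mono) blast
    also have "\<dots> \<subseteq> E n"
      using E(3)[of n] decseqD[OF E(2), of n "Suc n"] by simp
    finally show "hutchinson N g (\<Inter>(range E)) \<subseteq> E n" .
  qed
next
  show "\<Inter>(range E) \<subseteq> hutchinson N g (\<Inter>(range E))"
  proof
    fix x assume x: "x \<in> \<Inter>(range E)"
    \<comment> \<open>x has a preimage in every E n; by compactness it has one in their intersection.\<close>
    define P where "P = (\<Union>i\<in>{1..N}. g i -` {x})"
    have "closed P"
      unfolding P_def using cont by (intro closed_UN) (auto intro: closed_vimage)
    have "\<Inter>(range (\<lambda>n. E n \<inter> P)) \<noteq> {}"
    proof (rule decseq_compact_Inter_nonempty)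
      show "compact (E 0 \<inter> P)"
        using E(1) \<open>closed P\<close> by (rule compact_Int_closed)
      show "closed (E n \<inter> P)" for n
        using E(1) \<open>closed P\<close> by (simp add: closed_Int compact_imp_closed)
      show "decseq (\<lambda>n. E n \<inter> P)"
        using E(2) by (auto simp: decseq_def)
      show "E n \<inter> P \<noteq> {}" for n
      proof -
        have "x \<in> hutchinson N g (E n)"
          using x E(3)[of n] by auto
        then obtain i y where "i \<in> {1..N}" "y \<in> E n" "g i y = x"
          unfolding hutchinson_def by auto
        then have "y \<in> E n \<inter> P"
          unfolding P_def by blast
        then show ?thesis
          by blast
      qed
    qed
    then obtain y where "y \<in> \<Inter>(range E)" "y \<in> P"
      by auto
    then show "x \<in> hutchinson N g (\<Inter>(range E))"
      unfolding hutchinson_def P_def by auto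
  qed
qed

lemma is_attractor_Inter_iterates:
  fixes g :: "nat \<Rightarrow> 'a::metric_space \<Rightarrow> 'a"
  assumes N: "N \<ge> 1" and K: "compact K" "K \<noteq> {}" "hutchinson N g K \<subseteq> K"
    and cont: "\<And>i. i \<in> {1..N} \<Longrightarrow> continuous_on UNIV (g i)"
  shows "is_attractor N g (\<Inter>n. (hutchinson N g ^^ n) K)"
proof -
  define E where "E n = (hutchinson N g ^^ n) K" for n
  have E_Suc: "E (Suc n) = hutchinson N g (E n)" for n
    by (simp add: E_def)
  have "E (Suc n) \<subseteq> E n" for n
    by (induction n) (simp_all add: E_def K(3) hutchinson_mono)
  then have "decseq E"
    by (rule decseq_SucI)
  have E_0: "E 0 = K"
    by (simp add: E_def)
  have E: "compact (E n)" "E n \<noteq> {}" for n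
  proof (induction n)
    case 0
    show "compact (E 0)" "E 0 \<noteq> {}"
      using K by (simp_all add: E_0)
  next
    case (Suc n)
    show "compact (E (Suc n))"
      unfolding E_Suc using Suc.IH(1) by (intro hutchinson_compact continuous_on_subset[OF cont]) auto
    show "E (Suc n) \<noteq> {}"
      unfolding E_Suc using Suc.IH(2) N by (rule hutchinson_nonempty[rotated])
  qed
  have "hutchinson N g (\<Inter>(range E)) = \<Inter>(range E)"
    using cont E(1) \<open>decseq E\<close> E_Suc by (rule hutchinson_Inter_decseq)
  moreover have "\<Inter>(range E) \<noteq> {}"
    using E \<open>decseq E\<close> by (intro decseq_compact_Inter_nonempty compact_imp_closed)
  moreover have "compact (\<Inter>(range E))"
  proof -
    have "E 0 \<inter> \<Inter>(range E) = \<Inter>(range E)"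
      by blast
    then show ?thesis
      using compact_Int_closed[OF E(1)[of 0] closed_INT] E(1) compact_imp_closed by metis
  qed
  ultimately show ?thesis
    unfolding is_attractor_iff_hutchinson E_def by blast
qed

lemma is_attractor_subset:
  fixes g :: "nat \<Rightarrow> 'a::metric_space \<Rightarrow> 'a"
  assumes A: "is_attractor N g A" and A': "is_attractor N g A'"
    and contr: "L < 1" "\<And>i. i \<in> {1..N} \<Longrightarrow> L-lipschitz_on UNIV (g i)"
  shows "A \<subseteq> A'"
proof -
  have A_props: "compact A" "A \<noteq> {}" "hutchinson N g A = A"
    and A'_props: "compact A'" "A' \<noteq> {}" "hutchinson N g A' = A'"
    using A A' by (auto simp: is_attractor_iff_hutchinson)
  \<comment> \<open>A point a of A farthest from A' is some g i b with b \<in> A, so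
    infdist a A' \<le> L * infdist b A' \<le> L * infdist a A', forcing infdist a A' = 0.\<close>
  obtain a where a: "a \<in> A" "\<And>y. y \<in> A \<Longrightarrow> infdist y A' \<le> infdist a A'"
    using continuous_attains_sup[OF A_props(1,2) continuous_on_infdist[OF continuous_on_id]] by blast
  obtain i b where ib: "i \<in> {1..N}" "b \<in> A" "a = g i b"
    using a(1) A_props(3) unfolding hutchinson_def by blast
  obtain b' where b': "b' \<in> A'" "infdist b A' = dist b b'"
    using infdist_attained_compact[OF A'_props(1,2)] .
  have "g i b' \<in> A'"
    using A'_props(3) ib(1) b'(1) unfolding hutchinson_def by blast
  then have "infdist a A' \<le> dist (g i b) (g i b')"
    using ib(3) by (simp add: infdist_le)
  also have "\<dots> \<le> L * infdist b A'"
    using lipschitz_onD[OF contr(2)[OF ib(1)]] b'(2) by simp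
  also have "\<dots> \<le> L * infdist a A'"
    using a(2)[OF ib(2)] lipschitz_on_nonneg[OF contr(2)[OF ib(1)]] by (rule mult_left_mono)
  finally have "(1 - L) * infdist a A' \<le> 0"
    by (simp add: algebra_simps)
  then have "infdist a A' \<le> 0"
    using contr(1) by (simp add: mult_le_0_iff)
  show ?thesis
  proof
    fix y assume "y \<in> A"
    then have "infdist y A' = 0"
      using a(2) \<open>infdist a A' \<le> 0\<close> infdist_nonneg[of y A'] by (meson order.trans order_antisym)
    then show "y \<in> A'"
      using in_closed_iff_infdist_zero[OF compact_imp_closed[OF A'_props(1)] A'_props(2)] by simp
  qed
qed

lemma attractor_eqI:
  assumes A: "is_attractor N g A"
    and contr: "L < 1" "\<And>i. i \<in> {1..N} \<Longrightarrow> L-lipschitz_on UNIV (g i)"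
  shows "attractor N g = A"
  unfolding attractor_def
proof (rule the_equality)
  fix A' assume "is_attractor N g A'"
  then show "A' = A"
    using is_attractor_subset[OF _ A contr] is_attractor_subset[OF A _ contr] by blast
qed (fact A)

lemma attractor_subset_invariant_compact:
  fixes g :: "nat \<Rightarrow> 'a::metric_space \<Rightarrow> 'a"
  assumes N: "N \<ge> 1" and K: "compact K" "K \<noteq> {}" "hutchinson N g K \<subseteq> K"
    and contr: "L < 1" "\<And>i. i \<in> {1..N} \<Longrightarrow> L-lipschitz_on UNIV (g i)"
  shows "is_attractor N g (attractor N g)" "attractor N g \<subseteq> K"
proof -
  have "is_attractor N g (\<Inter>n. (hutchinson N g ^^ n) K)"
    using N K by (rule is_attractor_Inter_iterates) (use contr(2) lipschitz_on_continuous_on in blast)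
  moreover from this contr have "attractor N g = (\<Inter>n. (hutchinson N g ^^ n) K)"
    by (rule attractor_eqI)
  moreover have "(\<Inter>n. (hutchinson N g ^^ n) K) \<subseteq> (hutchinson N g ^^ 0) K"
    by (rule INT_lower) simp
  ultimately show "is_attractor N g (attractor N g)" "attractor N g \<subseteq> K"
    by simp_all
qed

section \<open>The Blaschke selection theorem\<close>

lemma compact_imp_countable_dense:
  fixes K :: "'a::metric_space set"
  assumes "compact K"
  obtains D where "countable D" "D \<subseteq> K" "K \<subseteq> closure D"
proof -
  have "\<exists>F. finite F \<and> F \<subseteq> K \<and> K \<subseteq> (\<Union>x\<in>F. ball x (inverse (Suc m)))" for m :: nat
    by (rule compactE_image[OF assms, of K "\<lambda>x. ball x (inverse (Suc m))"]) auto
  then obtain F where F: "\<And>m. finite (F m)" "\<And>m. F m \<subseteq> K"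
    "\<And>m. K \<subseteq> (\<Union>x\<in>F m. ball x (inverse (Suc m)))"
    by metis
  show thesis
  proof (rule that[of "\<Union>m. F m"])
    show "countable (\<Union>m. F m)"
      using F(1) by (simp add: countable_finite)
    show "(\<Union>m. F m) \<subseteq> K"
      using F(2) by blast
    show "K \<subseteq> closure (\<Union>m. F m)"
    proof (clarsimp simp: closure_approachable)
      fix x and e :: real assume "x \<in> K" "0 < e"
      then obtain m where m: "inverse (Suc m) < e"
        using reals_Archimedean by blast
      obtain y where "y \<in> F m" "dist y x < inverse (Suc m)"
        using F(3)[of m] \<open>x \<in> K\<close> by auto
      with m show "\<exists>m. \<exists>y\<in>F m. dist y x < e"
        by force
    qed
  qed
qed

lemma infdist_lipschitz_on: "1-lipschitz_on S (\<lambda>x. infdist x A)"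
  by (rule lipschitz_onI) (auto simp: dist_real_def infdist_triangle_abs)

lemma uniformly_convergent_on_equi_lipschitz:
  fixes \<psi> :: "nat \<Rightarrow> 'a::metric_space \<Rightarrow> 'b::complete_space"
  assumes "compact K" "D \<subseteq> K" "K \<subseteq> closure D"
    and lip: "\<And>n. C-lipschitz_on K (\<psi> n)"
    and conv: "\<And>x. x \<in> D \<Longrightarrow> convergent (\<lambda>n. \<psi> n x)"
  shows "uniformly_convergent_on K \<psi>"
proof (intro Cauchy_uniformly_convergent uniformly_Cauchy_onI)
  fix e :: real assume "e > 0"
  have "C \<ge> 0" using lipschitz_on_nonneg[OF lip] .
  define d where "d = e / (3 * (C + 1))"
  have "d > 0" "C * d < e / 3"
    using \<open>e > 0\<close> \<open>C \<ge> 0\<close> by (auto simp: d_def field_simps)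
  have "K \<subseteq> (\<Union>t\<in>D. ball t d)"
    using assms(3) \<open>d > 0\<close> by (force simp: closure_approachable dist_commute)
  then obtain T where T: "T \<subseteq> D" "finite T" "K \<subseteq> (\<Union>t\<in>T. ball t d)"
    using compactE_image[OF assms(1)] by (metis open_ball)
  have "\<exists>M. \<forall>m\<ge>M. \<forall>n\<ge>M. dist (\<psi> m t) (\<psi> n t) < e / 3" if "t \<in> D" for t
    using conv[OF that] \<open>e > 0\<close> by (intro metric_CauchyD) (simp_all add: convergent_Cauchy)
  then obtain M where M: "\<And>t m n. t \<in> D \<Longrightarrow> m \<ge> M t \<Longrightarrow> n \<ge> M t \<Longrightarrow> dist (\<psi> m t) (\<psi> n t) < e / 3"
    by metis
  show "\<exists>M'. \<forall>x\<in>K. \<forall>m\<ge>M'. \<forall>n\<ge>M'. dist (\<psi> m x) (\<psi> n x) < e"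
  proof (intro exI ballI allI impI)
    fix x m n assume "x \<in> K" and mn: "Max (insert 0 (M ` T)) \<le> m" "Max (insert 0 (M ` T)) \<le> n"
    then obtain t where t: "t \<in> T" "dist t x < d"
      using T(3) by auto
    have "t \<in> K" using t(1) T(1) assms(2) by blast
    have "M t \<le> Max (insert 0 (M ` T))"
      using t(1) T(2) by (intro Max_ge) auto
    then have "dist (\<psi> m t) (\<psi> n t) < e / 3"
      using M t(1) T(1) mn by (meson le_trans subsetD)
    moreover have near_t: "dist (\<psi> k x) (\<psi> k t) \<le> C * d" for k
      using lipschitz_onD[OF lip \<open>x \<in> K\<close> \<open>t \<in> K\<close>] t(2) \<open>C \<ge> 0\<close>
      by (smt (verit, ccfv_SIG) dist_commute mult_left_mono)
    ultimately show "dist (\<psi> m x) (\<psi> n x) < e"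
      using dist_triangle[of "\<psi> m x" "\<psi> n x" "\<psi> m t"] dist_triangle[of "\<psi> m t" "\<psi> n x" "\<psi> n t"]
        dist_commute[of "\<psi> n t" "\<psi> n x"] near_t[of m] near_t[of n] \<open>C * d < e / 3\<close>
      by linarith
  qed
qed

lemma hausdorff_dist_le:
  fixes S T :: "'a::metric_space set"
  assumes "S \<noteq> {}" "T \<noteq> {}"
    and "\<And>a. a \<in> S \<Longrightarrow> infdist a T \<le> e" "\<And>b. b \<in> T \<Longrightarrow> infdist b S \<le> e"
  shows "0 \<le> hausdorff_dist S T" "hausdorff_dist S T \<le> e"
proof -
  obtain a where "a \<in> S" using assms(1) by blast
  have "infdist a T \<le> (SUP a\<in>S. infdist a T)"
    using assms(3) \<open>a \<in> S\<close> by (intro cSUP_upper bdd_aboveI2) auto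
  then show "0 \<le> hausdorff_dist S T"
    unfolding hausdorff_dist_def using infdist_nonneg[of a T] by linarith
  show "hausdorff_dist S T \<le> e"
    unfolding hausdorff_dist_def using assms by (auto intro!: cSUP_least)
qed

lemma infdist_limit_attained:
  fixes A :: "nat \<Rightarrow> 'a::metric_space set"
  assumes K: "compact K" and A: "\<And>n. compact (A n)" "\<And>n. A n \<noteq> {}" "\<And>n. A n \<subseteq> K"
    and lim: "\<And>x. x \<in> K \<Longrightarrow> (\<lambda>n. infdist x (A n)) \<longlonglongrightarrow> g x"
    and "x \<in> K"
  obtains y where "y \<in> K" "g y = 0" "dist x y = g x"
proof -
  have "\<exists>a. a \<in> A n \<and> infdist x (A n) = dist x a" for n
    by (meson infdist_attained_compact[OF A(1,2)])
  then obtain a where a: "\<And>n. a n \<in> A n" "\<And>n. infdist x (A n) = dist x (a n)"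
    by metis
  then have "\<forall>n. a n \<in> K"
    using A(3) by blast
  then obtain y r where y: "y \<in> K" "strict_mono r" "(a \<circ> r) \<longlonglongrightarrow> y"
    using seq_compactE[OF compact_imp_seq_compact[OF K]] by metis
  have lim_y: "(\<lambda>j. infdist y (A (r j))) \<longlonglongrightarrow> g y"
    using LIMSEQ_subseq_LIMSEQ[OF lim[OF y(1)] y(2)] by (simp add: o_def)
  have "(\<lambda>j. dist y (a (r j))) \<longlonglongrightarrow> 0"
    using tendsto_dist[OF tendsto_const y(3), of y] by (simp add: o_def)
  with lim_y have "g y \<le> 0"
    by (rule LIMSEQ_le) (use a(1) infdist_le in blast)
  moreover have "g y \<ge> 0"
    using lim_y by (rule LIMSEQ_le_const) (simp add: infdist_nonneg)
  ultimately have "g y = 0"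
    by (rule antisym)
  have "(\<lambda>j. dist x (a (r j))) \<longlonglongrightarrow> dist x y"
    using tendsto_dist[OF tendsto_const y(3), of x] by (simp add: o_def)
  moreover have "(\<lambda>j. dist x (a (r j))) \<longlonglongrightarrow> g x"
    using LIMSEQ_subseq_LIMSEQ[OF lim[OF \<open>x \<in> K\<close>] y(2)] by (simp add: o_def a(2))
  ultimately have "dist x y = g x"
    by (rule LIMSEQ_unique)
  with y(1) \<open>g y = 0\<close> show thesis
    by (rule that)
qed

lemma hausdorff_dist_tendsto_zero_set:
  fixes A :: "nat \<Rightarrow> 'a::metric_space set"
  assumes K: "compact K" and A: "\<And>n. compact (A n)" "\<And>n. A n \<noteq> {}" "\<And>n. A n \<subseteq> K"
    and unif: "uniform_limit K (\<lambda>n x. infdist x (A n)) g sequentially"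
  defines "B \<equiv> {x \<in> K. g x = 0}"
  shows "compact B" "B \<noteq> {}" "(\<lambda>n. hausdorff_dist (A n) B) \<longlonglongrightarrow> 0"
proof -
  have lim: "(\<lambda>n. infdist x (A n)) \<longlonglongrightarrow> g x" if "x \<in> K" for x
    using tendsto_uniform_limitI[OF unif that] .
  have near: "\<exists>y\<in>B. dist x y = g x" if "x \<in> K" for x
    using infdist_limit_attained[OF K A lim that] unfolding B_def by blast
  have "continuous_on K g"
    using unif by (rule uniform_limit_theorem[rotated]) (simp_all add: always_eventually continuous_on_infdist continuous_on_id)
  then have "closed B"
    unfolding B_def using K by (simp add: continuous_closed_preimage_constant compact_imp_closed)
  moreover have "K \<inter> B = B"
    unfolding B_def by blast
  ultimately show "compact B"
    using compact_Int_closed[OF K] by metis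
  show "B \<noteq> {}"
    using near A(2,3) by blast
  show "(\<lambda>n. hausdorff_dist (A n) B) \<longlonglongrightarrow> 0"
  proof (rule LIMSEQ_I)
    fix e :: real assume "e > 0"
    then obtain M where M: "\<And>n x. n \<ge> M \<Longrightarrow> x \<in> K \<Longrightarrow> dist (infdist x (A n)) (g x) < e / 2"
      using unif unfolding uniform_limit_sequentially_iff by (meson half_gt_zero)
    have "infdist a B \<le> e / 2" if "n \<ge> M" "a \<in> A n" for n a
    proof -
      have "a \<in> K" "infdist a (A n) = 0"
        using that(2) A(3) by auto
      then have "g a < e / 2"
        using M[OF that(1) \<open>a \<in> K\<close>] by (simp add: dist_real_def abs_less_iff)
      moreover obtain y where "y \<in> B" "dist a y = g a"
        using near[OF \<open>a \<in> K\<close>] by blast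
      ultimately show ?thesis
        using infdist_le[of y B a] by linarith
    qed
    moreover have "infdist b (A n) \<le> e / 2" if "n \<ge> M" "b \<in> B" for n b
    proof -
      have "b \<in> K" "g b = 0"
        using that(2) unfolding B_def by auto
      then show ?thesis
        using M[OF that(1) \<open>b \<in> K\<close>] by (simp add: dist_real_def abs_less_iff)
    qed
    ultimately have bound: "0 \<le> hausdorff_dist (A n) B" "hausdorff_dist (A n) B \<le> e / 2"
      if "n \<ge> M" for n
      using hausdorff_dist_le[OF A(2) \<open>B \<noteq> {}\<close>] that by blast+
    show "\<exists>M. \<forall>n\<ge>M. norm (hausdorff_dist (A n) B - 0) < e"
    proof (intro exI allI impI)
      fix n assume "M \<le> n"
      with bound[of n] \<open>e > 0\<close> show "norm (hausdorff_dist (A n) B - 0) < e"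
        by (simp add: abs_of_nonneg)
    qed
  qed
qed

lemma blaschke_selection:
  fixes A :: "nat \<Rightarrow> 'a::metric_space set"
  assumes K: "compact K" and A: "\<And>n. compact (A n)" "\<And>n. A n \<noteq> {}" "\<And>n. A n \<subseteq> K"
  obtains r B where "strict_mono r" "compact B" "B \<noteq> {}" "(\<lambda>n. hausdorff_dist (A (r n)) B) \<longlonglongrightarrow> 0"
proof -
  obtain D where D: "countable D" "D \<subseteq> K" "K \<subseteq> closure D"
    using compact_imp_countable_dense[OF K] .
  have "norm (infdist x (A n)) \<le> diameter K" if "x \<in> D" for n x
  proof -
    obtain a where "a \<in> A n"
      using A(2) by blast
    then have "infdist x (A n) \<le> dist x a"
      by (rule infdist_le)
    also have "\<dots> \<le> diameter K"
      using \<open>a \<in> A n\<close> that A(3) D(2) by (intro diameter_bounded_bound compact_imp_bounded K) auto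
    finally show ?thesis
      by (simp add: infdist_nonneg)
  qed
  then obtain k where k: "strict_mono k" "\<And>x. x \<in> D \<Longrightarrow> \<exists>l. (\<lambda>n. infdist x (A (k n))) \<longlonglongrightarrow> l"
    using function_convergent_subsequence[OF D(1), of "\<lambda>n x. infdist x (A n)"] by metis
  have "uniformly_convergent_on K (\<lambda>n x. infdist x (A (k n)))"
    using K D(2,3) infdist_lipschitz_on by (rule uniformly_convergent_on_equi_lipschitz) (use k(2) in \<open>auto simp: convergent_def\<close>)
  then obtain g where "uniform_limit K (\<lambda>n x. infdist x (A (k n))) g sequentially"
    unfolding uniformly_convergent_on_def by blast
  from hausdorff_dist_tendsto_zero_set[OF K A this] show thesis
    by (rule that[OF k(1)])
qed

section \<open>Families of maps near the parameter 1\<close>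

lemma lipschitz_on_max_zero:
  assumes "\<And>x y. x \<in> U \<Longrightarrow> y \<in> U \<Longrightarrow> dist (g x) (g y) \<le> L * dist x y"
  shows "(max L 0)-lipschitz_on U g"
proof (rule lipschitz_onI)
  fix x y assume "x \<in> U" "y \<in> U"
  then show "dist (g x) (g y) \<le> max L 0 * dist x y"
    using assms[of x y] mult_right_mono[of L "max L 0" "dist x y"] by simp
qed simp

lemma perturbed_contraction_maps_cball:
  fixes g h :: "'a::metric_space \<Rightarrow> 'a"
  assumes "L-lipschitz_on UNIV g" "\<And>x. dist (h x) (g x) \<le> c"
    and "dist (g p) p + c \<le> (1 - L) * R"
  shows "h ` cball p R \<subseteq> cball p R"
proof clarify
  fix x assume "x \<in> cball p R"
  then have "L * dist p x \<le> L * R"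
    using lipschitz_on_nonneg[OF assms(1)] by (simp add: mult_left_mono)
  have "dist p (h x) \<le> dist p (g p) + dist (g p) (g x) + dist (g x) (h x)"
    by (metis add.commute add_left_mono dist_triangle order_trans)
  also have "\<dots> \<le> dist (g p) p + L * dist p x + c"
    using lipschitz_onD[OF assms(1), of p x] assms(2)[of x] by (simp add: dist_commute add_mono)
  also have "\<dots> \<le> R"
    using \<open>L * dist p x \<le> L * R\<close> assms(3) by (simp add: algebra_simps)
  finally show "h x \<in> cball p R"
    by simp
qed

lemma strict_mono_tendsto_from_below:
  fixes a b :: real
  assumes "a < b"
  obtains t where "strict_mono t" "\<And>n. t n \<in> {a<..<b}" "t \<longlonglongrightarrow> b"
proof
  define t where "t n = b - (b - a) / real (n + 2)" for n
  show "strict_mono t"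
    unfolding strict_mono_Suc_iff t_def using assms by (simp add: divide_strict_left_mono)
  show "t n \<in> {a<..<b}" for n
    unfolding t_def using assms mult_right_mono[of a b "real n"] by (simp add: field_simps)
  have "(\<lambda>n. (b - a) / real (n + 2)) \<longlonglongrightarrow> 0"
    using LIMSEQ_ignore_initial_segment[OF lim_const_over_n, of "b - a" 2] by simp
  then show "t \<longlonglongrightarrow> b"
    unfolding t_def by (auto intro: tendsto_eq_intros)
qed

lemma eventually_uniformly_close_at_left_1:
  fixes f :: "nat \<Rightarrow> real \<Rightarrow> 'a::metric_space \<Rightarrow> 'a"
  assumes "finite I"
    and unif: "\<And>i. i \<in> I \<Longrightarrow> \<exists>\<delta>>0. \<forall>s\<in>{0..1}. \<bar>s - 1\<bar> < \<delta> \<longrightarrow> (\<forall>x. dist (f i s x) (f i 1 x) \<le> e)"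
  shows "\<forall>\<^sub>F s in at_left 1. \<forall>i\<in>I. \<forall>x. dist (f i s x) (f i 1 x) \<le> e"
proof (rule eventually_ball_finite[OF \<open>finite I\<close>], rule ballI)
  fix i assume "i \<in> I"
  then obtain \<delta> where "\<delta> > 0" and \<delta>: "\<forall>s\<in>{0..1}. \<bar>s - 1\<bar> < \<delta> \<longrightarrow> (\<forall>x. dist (f i s x) (f i 1 x) \<le> e)"
    using unif by blast
  have "\<forall>\<^sub>F s in at_left 1. s \<in> {max 0 (1 - \<delta>)<..<1}"
    using \<open>\<delta> > 0\<close> by (intro eventually_at_left_real) auto
  then show "\<forall>\<^sub>F s in at_left 1. \<forall>x. dist (f i s x) (f i 1 x) \<le> e"
    by (rule eventually_mono) (use \<delta> in auto)
qed

lemma family_invariant_compact_near_1: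
  fixes f :: "nat \<Rightarrow> real \<Rightarrow> 'a::metric_space \<Rightarrow> 'a" and N :: nat
  assumes proper: "\<And>S::'a set. closed S \<Longrightarrow> bounded S \<Longrightarrow> compact S"
    and H2: "\<And>t. t \<in> {0..<1} \<Longrightarrow>
               \<exists>L<1. \<forall>i\<in>{1..N}. \<forall>x y. dist (f i t x) (f i t y) \<le> L * dist x y"
    and unif: "\<And>i t e. i \<in> {1..N} \<Longrightarrow> t \<in> {0..1} \<Longrightarrow> e > 0 \<Longrightarrow>
               \<exists>\<delta>>0. \<forall>s\<in>{0..1}. \<bar>s - t\<bar> < \<delta> \<longrightarrow> (\<forall>x. dist (f i s x) (f i t x) \<le> e)"
  obtains t0 K where "t0 \<in> {0..<1}" "compact K" "K \<noteq> {}"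
    "\<And>i s. i \<in> {1..N} \<Longrightarrow> s \<in> {t0..<1} \<Longrightarrow> f i s ` K \<subseteq> K"
proof -
  have "\<forall>\<^sub>F s in at_left 1. \<forall>i\<in>{1..N}. \<forall>x. dist (f i s x) (f i 1 x) \<le> 1"
    using unif[of _ 1 1] by (intro eventually_uniformly_close_at_left_1) auto
  then obtain a where "a < 1"
    and close: "\<And>s i x. a < s \<Longrightarrow> s < 1 \<Longrightarrow> i \<in> {1..N} \<Longrightarrow> dist (f i s x) (f i 1 x) \<le> 1"
    unfolding eventually_at_left_field by blast
  define t0 where "t0 = (max a 0 + 1) / 2"
  have t0: "t0 \<in> {0..<1}" "a < t0"
    using \<open>a < 1\<close> by (auto simp: t0_def)
  obtain L0 where "L0 < 1" and "\<forall>i\<in>{1..N}. \<forall>x y. dist (f i t0 x) (f i t0 y) \<le> L0 * dist x y"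
    using H2[OF t0(1)] by blast
  then have lip: "(max L0 0)-lipschitz_on UNIV (f i t0)" if "i \<in> {1..N}" for i
    using that by (intro lipschitz_on_max_zero) blast
  have near_t0: "dist (f i s x) (f i t0 x) \<le> 2" if "i \<in> {1..N}" "s \<in> {t0..<1}" for i s x
    using close[of s i x] close[of t0 i x] dist_triangle2[of "f i s x" "f i t0 x" "f i 1 x"] that t0
    by fastforce
  fix p :: 'a
  define M where "M = Max (insert 0 ((\<lambda>i. dist (f i t0 p) p) ` {1..N}))"
  define R where "R = (M + 2) / (1 - max L0 0)"
  have "M \<ge> 0"
    unfolding M_def by (intro Max_ge) auto
  moreover have "dist (f i t0 p) p \<le> M" if "i \<in> {1..N}" for i
    unfolding M_def using that by (intro Max_ge) auto
  ultimately have R: "R \<ge> 0" "\<And>i. i \<in> {1..N} \<Longrightarrow> dist (f i t0 p) p + 2 \<le> (1 - max L0 0) * R"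
    using \<open>L0 < 1\<close> by (auto simp: R_def)
  show thesis
  proof (rule that[OF t0(1)])
    show "compact (cball p R)"
      by (intro proper closed_cball bounded_cball)
    show "cball p R \<noteq> {}"
      using R(1) by simp
    show "f i s ` cball p R \<subseteq> cball p R" if "i \<in> {1..N}" "s \<in> {t0..<1}" for i s
      using lip near_t0 R(2) that by (intro perturbed_contraction_maps_cball) blast+
  qed
qed

lemma family_attractors_near_1:
  fixes f :: "nat \<Rightarrow> real \<Rightarrow> 'a::metric_space \<Rightarrow> 'a" and N :: nat
  assumes N: "N \<ge> 1"
    and proper: "\<And>S::'a set. closed S \<Longrightarrow> bounded S \<Longrightarrow> compact S"
    and H2: "\<And>t. t \<in> {0..<1} \<Longrightarrow>
               \<exists>L<1. \<forall>i\<in>{1..N}. \<forall>x y. dist (f i t x) (f i t y) \<le> L * dist x y"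
    and unif: "\<And>i t e. i \<in> {1..N} \<Longrightarrow> t \<in> {0..1} \<Longrightarrow> e > 0 \<Longrightarrow>
               \<exists>\<delta>>0. \<forall>s\<in>{0..1}. \<bar>s - t\<bar> < \<delta> \<longrightarrow> (\<forall>x. dist (f i s x) (f i t x) \<le> e)"
  obtains t0 K where "t0 \<in> {0..<1}" "compact K"
    "\<And>s. s \<in> {t0..<1} \<Longrightarrow> is_attractor N (\<lambda>i. f i s) (attractor N (\<lambda>i. f i s))"
    "\<And>s. s \<in> {t0..<1} \<Longrightarrow> attractor N (\<lambda>i. f i s) \<subseteq> K"
proof -
  obtain t0 K where t0: "t0 \<in> {0..<1}" and K: "compact K" "K \<noteq> {}"
    and inv: "\<And>i s. i \<in> {1..N} \<Longrightarrow> s \<in> {t0..<1} \<Longrightarrow> f i s ` K \<subseteq> K"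
    using family_invariant_compact_near_1[OF proper H2 unif] by blast
  have attractor_s: "is_attractor N (\<lambda>i. f i s) (attractor N (\<lambda>i. f i s))"
    "attractor N (\<lambda>i. f i s) \<subseteq> K" if s: "s \<in> {t0..<1}" for s
  proof -
    have "s \<in> {0..<1}"
      using s t0 by simp
    then obtain L where "L < 1" and "\<forall>i\<in>{1..N}. \<forall>x y. dist (f i s x) (f i s y) \<le> L * dist x y"
      using H2 by blast
    then have lip: "(max L 0)-lipschitz_on UNIV (f i s)" if "i \<in> {1..N}" for i
      using that by (intro lipschitz_on_max_zero) blast
    have hutch: "hutchinson N (\<lambda>i. f i s) K \<subseteq> K"
      using inv s unfolding hutchinson_def by blast
    have "max L 0 < 1"
      using \<open>L < 1\<close> by simp
    from attractor_subset_invariant_compact[OF N K hutch this lip]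
    show "is_attractor N (\<lambda>i. f i s) (attractor N (\<lambda>i. f i s))" "attractor N (\<lambda>i. f i s) \<subseteq> K"
      by simp_all
  qed
  from t0 K(1) attractor_s show thesis
    by (rule that)
qed

text \<open>Completeness follows from properness, and continuity of f_(i,t) for t < 1 from (H2).\<close>

theorem mainTheorem6:
  fixes f :: "nat \<Rightarrow> real \<Rightarrow> 'a::metric_space \<Rightarrow> 'a" and N :: nat
  assumes proper: "\<And>S::'a set. closed S \<Longrightarrow> bounded S \<Longrightarrow> compact S"
    and complete: "complete (UNIV :: 'a set)"
    and N2: "N \<ge> 2"
    and cont: "\<And>i t. i \<in> {1..N} \<Longrightarrow> t \<in> {0..1} \<Longrightarrow> continuous_on UNIV (f i t)"
    and H2: "\<And>t. t \<in> {0..<1} \<Longrightarrow>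
               \<exists>L<1. \<forall>i\<in>{1..N}. \<forall>x y. dist (f i t x) (f i t y) \<le> L * dist x y"
    and unif: "\<And>i t e. i \<in> {1..N} \<Longrightarrow> t \<in> {0..1} \<Longrightarrow> e > 0 \<Longrightarrow>
               \<exists>\<delta>>0. \<forall>s\<in>{0..1}. \<bar>s - t\<bar> < \<delta> \<longrightarrow> (\<forall>x. dist (f i s x) (f i t x) \<le> e)"
  shows "\<exists>B. upper_transition_attractor N f B"
proof -
  have "N \<ge> 1"
    using N2 by simp
  obtain t0 K where t0: "t0 \<in> {0..<1}" and K: "compact K"
    and A: "\<And>s. s \<in> {t0..<1} \<Longrightarrow> is_attractor N (\<lambda>i. f i s) (attractor N (\<lambda>i. f i s))"
      "\<And>s. s \<in> {t0..<1} \<Longrightarrow> attractor N (\<lambda>i. f i s) \<subseteq> K"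
    using family_attractors_near_1[OF \<open>N \<ge> 1\<close> proper H2 unif] by blast
  obtain t where t: "strict_mono t" "\<And>n. t n \<in> {t0<..<1}" "t \<longlonglongrightarrow> 1"
    using strict_mono_tendsto_from_below[of t0 1] t0 by auto
  have t_in: "t n \<in> {t0..<1}" "t n \<in> {0..<1}" for n
    using t(2)[of n] t0 by simp_all
  define A_t where "A_t n = attractor N (\<lambda>i. f i (t n))" for n
  obtain r B where r: "strict_mono r" and B: "compact B" "B \<noteq> {}"
    and lim: "(\<lambda>n. hausdorff_dist (A_t (r n)) B) \<longlonglongrightarrow> 0"
  proof (rule blaschke_selection[OF K])
    show "compact (A_t n)" "A_t n \<noteq> {}" for n
      using A(1)[OF t_in(1)] unfolding A_t_def is_attractor_def by simp_all
    show "A_t n \<subseteq> K" for n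
      using A(2)[OF t_in(1)] unfolding A_t_def .
  qed
  have "upper_transition_attractor N f B"
    unfolding upper_transition_attractor_def
  proof (intro conjI exI[of _ "t \<circ> r"] allI)
    show "strict_mono (t \<circ> r)" "(t \<circ> r) \<longlonglongrightarrow> 1"
      using strict_mono_o[OF t(1) r] LIMSEQ_subseq_LIMSEQ[OF t(3) r] .
    show "(\<lambda>n. hausdorff_dist (attractor N (\<lambda>i. f i ((t \<circ> r) n))) B) \<longlonglongrightarrow> 0"
      using lim by (simp add: A_t_def)
    show "(t \<circ> r) n \<in> {0..<1}" for n
      using t_in(2) by simp
  qed (fact B)+
  then show ?thesis ..
qed

end
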